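(* Let $F_0,F_1$ be distribution functions of real random variables $Y_0,Y_1$ and $\alpha\in(0,1)$. If $$1+\inf_{y\in\mathbb{R}}\min\{F_1(y)-P(Y_0<y),\,0\}>\alpha,$$ then every interval $I$ such that $P(Y_1-Y_0\in I)\ge1-\alpha$ for every joint distribution of $(Y_0,Y_1)$ with marginals $F_0,F_1$ satisfies $I\cap(-\infty,0]\neq\emptyset$ (i.e. the left endpoint of $I$ cannot be strictly positive).
   Context: $Y_0,Y_1$ are potential outcomes with known marginal cdfs $F_0,F_1$ and unknown joint distribution; $\mathrm{ITE}=Y_1-Y_0$. The quantity $1+\inf_y\min\{F_1(y)-P(Y_0<y),0\}$ is the sharp upper bound on $P(Y_1-Y_0\le0)$ over all joint distributions with these marginals. *)

theory Defs
  imports "HOL-Probability.Probability"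
begin

definition coupling :: "real measure \<Rightarrow> real measure \<Rightarrow> (real \<times> real) measure \<Rightarrow> bool" where
  "coupling M0 M1 J \<longleftrightarrow> prob_space J \<and> sets J = sets borel \<and>
     distr J borel fst = M0 \<and> distr J borel snd = M1"

end

theory Submission
  imports Defs
begin

(* Put s = - inf_y min (F1 y - P(Y0 < y)) 0, so that 0 <= s < 1 - alpha and
   P(Y0 < y) - s <= F1 y for all y. For U uniform on (0,1), the pair
   (F0^-1 U, F1^-1 ((U - s) mod 1)) has the prescribed marginals, because rotating the
   circle R/Z preserves the uniform law. The shifted cdf inequality gives
   F1^-1 (U - s) <= F0^-1 U whenever U > s, so under this coupling Y1 - Y0 > 0 has
   probability at most s < 1 - alpha: no set of positive reals can receive probability
   1 - alpha under every coupling. *)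

abbreviation uniform01 :: "real measure" where
  "uniform01 \<equiv> restrict_space lborel {0<..<1}"

lemma prob_space_uniform01: "prob_space uniform01"
  by (auto simp: emeasure_restrict_space space_restrict_space intro!: prob_spaceI)

definition rotate :: "real \<Rightarrow> real \<Rightarrow> real" where
  "rotate s u = (if s < u then u - s else u + 1 - s)"

lemma borel_measurable_rotate [measurable]: "rotate s \<in> borel_measurable borel"
  unfolding rotate_def by measurable

lemma measure_rotate_le:
  fixes s c :: real
  assumes "0 \<le> s" "s < 1" "0 \<le> c" "c \<le> 1"
  shows "measure uniform01 {u \<in> space uniform01. rotate s u \<le> c} = c"
proof -
  have "measure uniform01 {u \<in> space uniform01. rotate s u \<le> c}
      = measure lborel {u \<in> {0<..<1}. rotate s u \<le> c}"
    by (subst measure_restrict_space) (auto simp: space_restrict_space)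
  also have "\<dots> = c"
  proof (cases "c + s < 1")
    case True
    then have "{u \<in> {0<..<1}. rotate s u \<le> c} = {s<..c + s}"
      using assms by (auto simp: rotate_def split: if_splits)
    then show ?thesis using assms True by simp
  next
    case False
    then have "{u \<in> {0<..<1}. rotate s u \<le> c} = {s<..<1} \<union> {0<..c + s - 1}"
      using assms by (auto simp: rotate_def split: if_splits)
    moreover have "measure lborel ({s<..<1} \<union> {0<..c + s - 1})
        = measure lborel {s<..<1} + measure lborel {0<..c + s - 1}"
      using assms False by (intro measure_Union) auto
    ultimately show ?thesis using assms False by simp
  qed
  finally show ?thesis .
qed

lemma AE_rotate_in_unit_interval:
  assumes "0 \<le> s" "s < 1"
  shows "AE u in uniform01. rotate s u \<in> {0<..<1}"
proof -
  have "AE u in lborel. u \<in> {0<..<1} \<longrightarrow> rotate s u \<in> {0<..<1}"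
    using AE_lborel_singleton[of s] by eventually_elim (use assms in \<open>auto simp: rotate_def\<close>)
  then show ?thesis by (subst AE_restrict_space_iff) auto
qed

(* The generalized inverse of the cdf, with the junk value 0 off (0,1). *)
definition quantile :: "real measure \<Rightarrow> real \<Rightarrow> real" where
  "quantile M w = (if w \<in> {0<..<1} then Inf {x. w \<le> cdf M x} else 0)"

context cdf_distribution
begin

lemma borel_measurable_quantile [measurable]: "quantile M \<in> borel_measurable borel"
  using measurable_restrict_space_iff[where \<Omega>="{0<..<1::real}" and M=borel and N=borel and c=0,
      THEN iffD1, OF _ _ measurable_CI]
  unfolding quantile_def by simp

lemma quantile_le_iff: "w \<in> {0<..<1} \<Longrightarrow> quantile M w \<le> x \<longleftrightarrow> w \<le> cdf M x"
  using pseudoinverse[of w x] by (simp add: quantile_def)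

lemma distr_quantile_uniform:
  assumes "prob_space P" and g [measurable]: "g \<in> borel_measurable P"
    and "AE w in P. g w \<in> {0<..<1}"
    and "\<And>c. 0 \<le> c \<Longrightarrow> c \<le> 1 \<Longrightarrow> measure P {w \<in> space P. g w \<le> c} = c"
  shows "distr P borel (\<lambda>w. quantile M (g w)) = M"
proof (rule cdf_unique)
  interpret P: prob_space P by fact
  show "real_distribution (distr P borel (\<lambda>w. quantile M (g w)))" by simp
  show "real_distribution M" by (rule real_distribution_axioms)
  show "cdf (distr P borel (\<lambda>w. quantile M (g w))) = cdf M"
  proof
    fix x
    have "cdf (distr P borel (\<lambda>w. quantile M (g w))) x
        = measure P {w \<in> space P. quantile M (g w) \<le> x}"
      unfolding cdf_def by (subst measure_distr) (auto simp: vimage_def Int_def conj_commute)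
    also have "\<dots> = measure P {w \<in> space P. g w \<le> cdf M x}"
      by (rule P.finite_measure_eq_AE) (use assms(3) in \<open>auto simp: quantile_le_iff\<close>)
    also have "\<dots> = cdf M x"
      using assms(4) cdf_nonneg cdf_bounded_prob by blast
    finally show "cdf (distr P borel (\<lambda>w. quantile M (g w))) x = cdf M x" .
  qed
qed

lemma distr_quantile_rotate:
  assumes "0 \<le> s" "s < 1"
  shows "distr uniform01 borel (\<lambda>u. quantile M (rotate s u)) = M"
  using assms prob_space_uniform01 AE_rotate_in_unit_interval measure_rotate_le
  by (intro distr_quantile_uniform) (auto intro: measurable_restrict_space1)

end

lemma quantile_shift_le:
  assumes "cdf_distribution M0" "cdf_distribution M1"
    and shift: "\<And>z. measure M0 {..<z} - s \<le> cdf M1 z"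
    and "0 \<le> s" "s < w" "w < 1"
  shows "quantile M1 (w - s) \<le> quantile M0 w"
proof -
  interpret A: cdf_distribution M0 by fact
  interpret B: cdf_distribution M1 by fact
  define y where "y = quantile M0 w"
  have "w \<le> cdf M0 y"
    using A.quantile_le_iff[of w y] assms by (simp add: y_def)
  have "w - s \<le> cdf M1 z" if "y < z" for z
  proof -
    have "cdf M0 y \<le> measure M0 {..<z}"
      unfolding cdf_def using that by (intro A.finite_measure_mono) auto
    then show ?thesis using shift[of z] \<open>w \<le> cdf M0 y\<close> by simp
  qed
  then have "w - s \<le> cdf M1 y"
    using B.cdf_is_right_cont[of y]
    by (intro tendsto_lowerbound[of "cdf M1" _ "at_right y"])
       (auto simp: continuous_within eventually_at_right_less
             intro: eventually_mono[OF eventually_at_right_less])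
  then show ?thesis
    using B.quantile_le_iff[of "w - s" y] assms by (simp add: y_def)
qed

definition rotation_coupling :: "real measure \<Rightarrow> real measure \<Rightarrow> real \<Rightarrow> (real \<times> real) measure" where
  "rotation_coupling M0 M1 s = distr uniform01 borel (\<lambda>u. (quantile M0 u, quantile M1 (rotate s u)))"

lemma coupling_rotation_coupling:
  assumes "cdf_distribution M0" "cdf_distribution M1" "0 \<le> s" "s < 1"
  shows "coupling M0 M1 (rotation_coupling M0 M1 s)"
proof -
  interpret A: cdf_distribution M0 by fact
  interpret B: cdf_distribution M1 by fact
  interpret U: prob_space uniform01 by (rule prob_space_uniform01)
  have f [measurable]: "(\<lambda>u. (quantile M0 u, quantile M1 (rotate s u))) \<in> borel_measurable uniform01"
    by (intro measurable_restrict_space1) measurable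
  have [measurable]: "fst \<in> borel_measurable (borel :: (real \<times> real) measure)"
    "snd \<in> borel_measurable (borel :: (real \<times> real) measure)"
    using measurable_fst measurable_snd by (metis borel_prod)+
  have "distr (rotation_coupling M0 M1 s) borel fst = distr uniform01 borel (quantile M0)"
    unfolding rotation_coupling_def by (subst distr_distr) (auto simp: comp_def)
  also have "\<dots> = distr uniform01 borel (\<lambda>u. quantile M0 (rotate 0 u))"
    by (intro distr_cong) (auto simp: space_restrict_space rotate_def)
  also have "\<dots> = M0"
    by (rule A.distr_quantile_rotate) simp_all
  finally have "distr (rotation_coupling M0 M1 s) borel fst = M0" .
  moreover have "distr (rotation_coupling M0 M1 s) borel snd = M1"
    unfolding rotation_coupling_def
    using B.distr_quantile_rotate[OF assms(3,4)] by (subst distr_distr) (auto simp: comp_def)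
  ultimately show ?thesis
    unfolding coupling_def rotation_coupling_def by (auto intro: U.prob_space_distr)
qed

lemma measure_rotation_coupling_less:
  assumes "cdf_distribution M0" "cdf_distribution M1"
    and "\<And>z. measure M0 {..<z} - s \<le> cdf M1 z"
    and "0 \<le> s" "s < 1"
  shows "measure (rotation_coupling M0 M1 s) {p. fst p < snd p} \<le> s"
proof -
  interpret A: cdf_distribution M0 by fact
  interpret B: cdf_distribution M1 by fact
  interpret U: prob_space uniform01 by (rule prob_space_uniform01)
  have f [measurable]: "(\<lambda>u. (quantile M0 u, quantile M1 (rotate s u))) \<in> borel_measurable uniform01"
    by (intro measurable_restrict_space1) measurable
  have less: "{p :: real \<times> real. fst p < snd p} \<in> sets borel"
    by (intro borel_open open_Collect_less) (auto intro: continuous_intros)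
  have "measure (rotation_coupling M0 M1 s) {p. fst p < snd p}
      = measure uniform01 {u \<in> space uniform01. quantile M0 u < quantile M1 (rotate s u)}"
    unfolding rotation_coupling_def by (subst measure_distr) (auto simp: vimage_def Int_def conj_commute less)
  also have "\<dots> \<le> measure uniform01 {0<..s}"
  proof (rule U.finite_measure_mono)
    show "{u \<in> space uniform01. quantile M0 u < quantile M1 (rotate s u)} \<subseteq> {0<..s}"
    proof (rule subsetI, rule ccontr)
      fix u assume u: "u \<in> {u \<in> space uniform01. quantile M0 u < quantile M1 (rotate s u)}"
        and "u \<notin> {0<..s}"
      then have "s < u" "u < 1" "rotate s u = u - s"
        by (auto simp: space_restrict_space rotate_def)
      with u quantile_shift_le[OF assms(1-4)] show False by fastforce
    qed
    show "{0<..s} \<in> sets uniform01"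
      using assms by (auto simp: sets_restrict_space_iff)
  qed
  also have "\<dots> = s"
    using assms by (subst measure_restrict_space) auto
  finally show ?thesis .
qed

lemma INF_cdf_gap:
  assumes "cdf_distribution M0" "cdf_distribution M1"
  defines "m \<equiv> INF y. min (cdf M1 y - measure M0 {..<y}) 0"
  shows "m \<le> 0" and "measure M0 {..<z} + m \<le> cdf M1 z"
proof -
  interpret A: cdf_distribution M0 by fact
  interpret B: cdf_distribution M1 by fact
  have "- 1 \<le> min (cdf M1 y - measure M0 {..<y}) 0" for y
    using B.cdf_nonneg[of y] A.prob_le_1[of "{..<y}"] by linarith
  then have "bdd_below (range (\<lambda>y. min (cdf M1 y - measure M0 {..<y}) 0))"
    by (intro bdd_belowI[of _ "-1"]) auto
  then have "m \<le> min (cdf M1 z - measure M0 {..<z}) 0"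
    unfolding m_def by (rule cINF_lower) simp
  then show "m \<le> 0" and "measure M0 {..<z} + m \<le> cdf M1 z"
    by simp_all
qed

theorem mainTheorem12:
  fixes M0 M1 :: "real measure" and \<alpha> :: real and I :: "real set"
  assumes "prob_space M0" and "sets M0 = sets borel"
    and "prob_space M1" and "sets M1 = sets borel"
    and "0 < \<alpha>" and "\<alpha> < 1"
    and "1 + (INF y. min (cdf M1 y - measure M0 {..<y}) 0) > \<alpha>"
    and "is_interval I"
    and "\<forall>J. coupling M0 M1 J \<longrightarrow>
           measure J {p. snd p - fst p \<in> I} \<ge> 1 - \<alpha>"
  shows "I \<inter> {..0} \<noteq> {}"
proof (rule ccontr)
  assume "\<not> I \<inter> {..0} \<noteq> {}"
  then have I_pos: "\<And>x. x \<in> I \<Longrightarrow> 0 < x" by force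
  have M0: "cdf_distribution M0" and M1: "cdf_distribution M1"
    using assms(1-4)
    by (simp_all add: cdf_distribution_def real_distribution_def real_distribution_axioms_def)
  define s where "s = - (INF y. min (cdf M1 y - measure M0 {..<y}) 0)"
  have s: "0 \<le> s" "s < 1" and shift: "\<And>z. measure M0 {..<z} - s \<le> cdf M1 z"
    using INF_cdf_gap[OF M0 M1] assms(5,7) by (auto simp: s_def)
  define J where "J = rotation_coupling M0 M1 s"
  have J: "coupling M0 M1 J"
    unfolding J_def using M0 M1 s by (rule coupling_rotation_coupling)
  then interpret J: prob_space J by (simp add: coupling_def)
  have "1 - \<alpha> \<le> measure J {p. snd p - fst p \<in> I}"
    using assms(9) J by blast
  also have "\<dots> \<le> measure J {p. fst p < snd p}"
    using I_pos J
    by (intro J.finite_measure_mono)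
       (force, auto simp: coupling_def intro!: borel_open open_Collect_less continuous_intros)
  also have "\<dots> \<le> s"
    unfolding J_def using M0 M1 shift s by (rule measure_rotation_coupling_less)
  finally show False using assms(7) by (simp add: s_def)
qed

end
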